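(* Any $n$-qubit reflection operator $R_{|\psi\rangle}$ can be approximated within Frobenius distance $\varepsilon$ by the product of two reflection operators whose corresponding unit vectors have coordinates in the computational basis of the form $(a+b\sqrt{2}+ci+di\sqrt{2})/2^{m(\varepsilon)}$ (with $a,b,c,d$ integers), where $m(\varepsilon)=\lceil n/2\rceil+O(\log(1/\varepsilon))$, using at most one ancilla. If the unit vector $|\psi\rangle$ has at least two coordinates in the computational basis equal to zero, it is sufficient to use one reflection operator and no ancilla is required.
   Context: For a unit vector $|\psi\rangle$, the reflection operator is $R_{|\psi\rangle}=\mathbb{I}-2|\psi\rangle\langle\psi|$. The Frobenius norm is $\Vert A\Vert_{Fr}^2=\mathrm{Tr}(AA^{\dagger})$. *)

theory Defs
  imports Complex_Main "Jordan_Normal_Form.Matrix"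
begin

definition unit_cvec :: "complex vec \<Rightarrow> bool" where
  "unit_cvec v \<longleftrightarrow> (\<Sum>i<dim_vec v. (cmod (v $ i))\<^sup>2) = 1"

definition outer_prod :: "complex vec \<Rightarrow> complex mat" where
  "outer_prod v = mat (dim_vec v) (dim_vec v) (\<lambda>(i, j). v $ i * cnj (v $ j))"

definition refl_op :: "complex vec \<Rightarrow> complex mat" where
  "refl_op v = 1\<^sub>m (dim_vec v) - (2::complex) \<cdot>\<^sub>m outer_prod v"

text \<open>Frobenius norm: sqrt (Tr (A A^dagger)) = sqrt of the sum of squared moduli of entries.\<close>
definition frobenius_norm :: "complex mat \<Rightarrow> real" where
  "frobenius_norm A = sqrt (\<Sum>i<dim_row A. \<Sum>j<dim_col A. (cmod (A $$ (i, j)))\<^sup>2)"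

text \<open>A \<otimes> I_2 (one ancilla qubit, taken as the least significant qubit).\<close>
definition kron_id2 :: "complex mat \<Rightarrow> complex mat" where
  "kron_id2 A = mat (2 * dim_row A) (2 * dim_col A)
     (\<lambda>(i, j). if i mod 2 = j mod 2 then A $$ (i div 2, j div 2) else 0)"

definition ring_coord :: "nat \<Rightarrow> complex \<Rightarrow> bool" where
  "ring_coord m z \<longleftrightarrow> (\<exists>a b c d :: int.
      z = (of_int a + of_int b * of_real (sqrt 2) + of_int c * \<i> + of_int d * \<i> * of_real (sqrt 2))
          / 2 ^ m)"

end

(*
  Round the coordinates of psi towards zero on the grid (Z + iZ) / 2^m.  This can only lose norm,
  and the loss is an integer over 4^m; by Lagrange's four-square theorem that integer is
  a^2 + b^2 + c^2 + d^2, so putting (a + bi) / 2^m and (c + di) / 2^m into two coordinates where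
  psi vanishes gives an exact unit vector phi with |phi - psi|^2 <= 3 sqrt (2 N) / 2^m, N = 2^n,
  and |R_phi - R_psi|_F <= 4 |phi - psi|.  Without two zero coordinates one ancilla provides them:
  R_psi (x) I = R_a R_b for the orthogonal vectors a = psi (x) |0> and b = psi (x) |1>, each of
  which vanishes on every index of the other parity.  Taking m = (n + 3) div 2 + 10 +
  ceil (2 log (1/eps)) makes all errors at most eps.
*)

theory Submission
  imports Defs "HOL-Computational_Algebra.Primes" "HOL-Analysis.L2_Norm"
begin

section \<open>Lagrange's four-square theorem\<close>

definition sum_four_squares :: "int \<Rightarrow> bool" where
  "sum_four_squares n \<longleftrightarrow> (\<exists>a b c d. n = a\<^sup>2 + b\<^sup>2 + c\<^sup>2 + d\<^sup>2)"

lemma euler_four_square_identity: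
  fixes x1 x2 x3 x4 y1 y2 y3 y4 :: "'a :: comm_ring_1"
  shows "(x1\<^sup>2 + x2\<^sup>2 + x3\<^sup>2 + x4\<^sup>2) * (y1\<^sup>2 + y2\<^sup>2 + y3\<^sup>2 + y4\<^sup>2) =
    (x1*y1 + x2*y2 + x3*y3 + x4*y4)\<^sup>2 + (x1*y2 - x2*y1 + x3*y4 - x4*y3)\<^sup>2
  + (x1*y3 - x3*y1 + x4*y2 - x2*y4)\<^sup>2 + (x1*y4 - x4*y1 + x2*y3 - x3*y2)\<^sup>2"
  by (simp add: power2_eq_square algebra_simps)

lemma sum_four_squares_mult:
  "sum_four_squares a \<Longrightarrow> sum_four_squares b \<Longrightarrow> sum_four_squares (a * b)"
  unfolding sum_four_squares_def by (metis euler_four_square_identity)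

lemma prime_dvd_sum_two_squares_plus_one:
  fixes p :: int
  assumes "prime p" "p > 2"
  obtains x y where "0 \<le> x" "2 * x < p" "0 \<le> y" "2 * y < p" "p dvd x\<^sup>2 + y\<^sup>2 + 1"
proof -
  define h where "h = (p - 1) div 2"
  have p_eq: "p = 2 * h + 1"
    using prime_odd_int[OF assms] unfolding h_def by (auto elim: oddE)
  have sq_inj: "inj_on (\<lambda>x. x\<^sup>2 mod p) {0..h}"
  proof (rule inj_onI)
    fix x x' assume x: "x \<in> {0..h}" "x' \<in> {0..h}" "x\<^sup>2 mod p = x'\<^sup>2 mod p"
    then have "p dvd (x - x') * (x + x')"
      by (simp add: mod_eq_dvd_iff power2_eq_square algebra_simps)
    then have "p dvd x - x' \<or> p dvd x + x'"
      using assms(1) prime_dvd_mult_iff by blast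
    moreover have "\<bar>x - x'\<bar> < p" "0 \<le> x + x'" "x + x' < p"
      using x p_eq by auto
    ultimately show "x = x'"
      using x dvd_imp_le_int[of "x - x'" p] dvd_imp_le_int[of "x + x'" p] by fastforce
  qed
  define A where "A = (\<lambda>x. x\<^sup>2 mod p) ` {0..h}"
  define B where "B = (\<lambda>y. (- 1 - y\<^sup>2) mod p) ` {0..h}"
  have "inj_on (\<lambda>y. (- 1 - y\<^sup>2) mod p) {0..h}"
    using sq_inj by (auto simp: inj_on_def mod_eq_dvd_iff dvd_diff_commute)
  then have card_AB: "card A = nat (h + 1)" "card B = nat (h + 1)"
    using card_image[OF sq_inj] unfolding A_def B_def by (simp_all add: card_image)
  have "A \<union> B \<subseteq> {0..<p}"
    unfolding A_def B_def using assms by auto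
  then have "card (A \<union> B) \<le> card {0..<p}"
    by (intro card_mono) auto
  then have "A \<inter> B \<noteq> {}"
    using card_Un_disjoint[of A B] card_AB p_eq assms(2) unfolding A_def B_def by auto
  then obtain x y where xy: "x \<in> {0..h}" "y \<in> {0..h}" "x\<^sup>2 mod p = (- 1 - y\<^sup>2) mod p"
    unfolding A_def B_def by force
  then have "p dvd x\<^sup>2 + y\<^sup>2 + 1"
    by (simp add: mod_eq_dvd_iff algebra_simps)
  with xy p_eq show thesis
    by (intro that[of x y]) auto
qed

lemma small_residue:
  fixes x m :: int
  assumes "m > 0"
  obtains y t where "x = y + m * t" "(2 * y)\<^sup>2 \<le> m\<^sup>2"
proof -
  define q where "q = m div 2"
  define r where "r = (x + q) mod m"
  have "0 \<le> r" "r < m" "0 \<le> m - 2 * q" "m - 2 * q < 2"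
    using assms minus_mult_div_eq_mod[of m 2] by (simp_all add: r_def q_def)
  then have "\<bar>2 * (r - q)\<bar> \<le> m"
    by arith
  then have "(2 * (r - q))\<^sup>2 \<le> m\<^sup>2"
    by (metis abs_le_square_iff abs_of_pos assms)
  moreover have "x = (r - q) + m * ((x + q) div m)"
    unfolding r_def by (metis add_diff_cancel_right' diff_add_eq mod_mult_div_eq)
  ultimately show thesis
    using that by blast
qed

lemma sum_four_squares_of_residues:
  fixes m k r :: int
  assumes "m \<noteq> 0" "m * k = x1\<^sup>2 + x2\<^sup>2 + x3\<^sup>2 + x4\<^sup>2" "m * r = y1\<^sup>2 + y2\<^sup>2 + y3\<^sup>2 + y4\<^sup>2"
    and "x1 = y1 + m * t1" "x2 = y2 + m * t2" "x3 = y3 + m * t3" "x4 = y4 + m * t4"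
  shows "sum_four_squares (k * r)"
proof -
  define w1 where "w1 = k - (x1 * t1 + x2 * t2 + x3 * t3 + x4 * t4)"
  define w2 where "w2 = x2 * t1 - x1 * t2 + x4 * t3 - x3 * t4"
  define w3 where "w3 = x3 * t1 - x1 * t3 + x2 * t4 - x4 * t2"
  define w4 where "w4 = x4 * t1 - x1 * t4 + x3 * t2 - x2 * t3"
  \<comment> \<open>Each term of Euler's identity for \<open>(m k) (m r)\<close> is divisible by \<open>m\<close>.\<close>
  have "(m * k) * (m * r) = (m * w1)\<^sup>2 + (m * w2)\<^sup>2 + (m * w3)\<^sup>2 + (m * w4)\<^sup>2"
    unfolding assms(2,3) euler_four_square_identity
    using assms(2) unfolding assms(4-7) w1_def w2_def w3_def w4_def
    by (simp add: power2_eq_square algebra_simps)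
  then have "m\<^sup>2 * (k * r) = m\<^sup>2 * (w1\<^sup>2 + w2\<^sup>2 + w3\<^sup>2 + w4\<^sup>2)"
    by (simp add: power2_eq_square algebra_simps)
  then show ?thesis
    using assms(1) unfolding sum_four_squares_def by auto
qed

lemma square_dvd_square_diff:
  fixes m y t :: int
  assumes "m dvd 2 * y"
  shows "m\<^sup>2 dvd (y + m * t)\<^sup>2 - y\<^sup>2"
proof -
  obtain k where "2 * y = m * k"
    using assms by blast
  then have "(y + m * t)\<^sup>2 - y\<^sup>2 = m\<^sup>2 * (k * t + t\<^sup>2)"
    by (simp add: power2_eq_square algebra_simps)
  then show ?thesis
    by simp
qed

lemma square_dvd_of_extreme_residues:
  fixes m r :: int
  assumes degenerate: "r = 0 \<or> r = m"
    and sum_eq: "y1\<^sup>2 + y2\<^sup>2 + y3\<^sup>2 + y4\<^sup>2 = m * r"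
    and small: "(2 * y1)\<^sup>2 \<le> m\<^sup>2" "(2 * y2)\<^sup>2 \<le> m\<^sup>2" "(2 * y3)\<^sup>2 \<le> m\<^sup>2" "(2 * y4)\<^sup>2 \<le> m\<^sup>2"
  shows "m\<^sup>2 dvd (y1 + m * t1)\<^sup>2 + (y2 + m * t2)\<^sup>2 + (y3 + m * t3)\<^sup>2 + (y4 + m * t4)\<^sup>2"
proof -
  \<comment> \<open>Every \<open>2 y\<^sub>i\<close> is \<open>0\<close> or \<open>\<plusminus>m\<close>.\<close>
  have "(2 * y1)\<^sup>2 = m * r" "(2 * y2)\<^sup>2 = m * r" "(2 * y3)\<^sup>2 = m * r" "(2 * y4)\<^sup>2 = m * r"
    using degenerate small sum_eq by (auto simp: power2_eq_square add_nonneg_eq_0_iff)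
  moreover have "m dvd 2 * y" if "(2 * y)\<^sup>2 = m * r" for y
    using degenerate that power2_eq_iff[of "2 * y" m] by (auto simp: power2_eq_square)
  ultimately have "m dvd 2 * y1" "m dvd 2 * y2" "m dvd 2 * y3" "m dvd 2 * y4"
    by blast+
  then have "m\<^sup>2 dvd ((y1 + m * t1)\<^sup>2 - y1\<^sup>2) + ((y2 + m * t2)\<^sup>2 - y2\<^sup>2)
      + ((y3 + m * t3)\<^sup>2 - y3\<^sup>2) + ((y4 + m * t4)\<^sup>2 - y4\<^sup>2) + m * r"
    using degenerate by (intro dvd_add square_dvd_square_diff) (auto simp: power2_eq_square)
  also have "\<dots> = (y1 + m * t1)\<^sup>2 + (y2 + m * t2)\<^sup>2 + (y3 + m * t3)\<^sup>2 + (y4 + m * t4)\<^sup>2"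
    unfolding sum_eq[symmetric] by (simp add: algebra_simps)
  finally show ?thesis .
qed

lemma sum_four_squares_descent:
  fixes p m :: int
  assumes p: "prime p" and m: "1 < m" "m < p" and "sum_four_squares (m * p)"
  obtains r where "0 < r" "r < m" "sum_four_squares (r * p)"
proof -
  obtain x1 x2 x3 x4 where x: "m * p = x1\<^sup>2 + x2\<^sup>2 + x3\<^sup>2 + x4\<^sup>2"
    using assms(4) unfolding sum_four_squares_def by blast
  have m0: "m > 0"
    using m by simp
  obtain y1 t1 y2 t2 y3 t3 y4 t4 where
      xy: "x1 = y1 + m * t1" "x2 = y2 + m * t2" "x3 = y3 + m * t3" "x4 = y4 + m * t4" and
      small: "(2 * y1)\<^sup>2 \<le> m\<^sup>2" "(2 * y2)\<^sup>2 \<le> m\<^sup>2" "(2 * y3)\<^sup>2 \<le> m\<^sup>2" "(2 * y4)\<^sup>2 \<le> m\<^sup>2"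
    using small_residue[OF m0] by metis
  define Y where "Y = y1\<^sup>2 + y2\<^sup>2 + y3\<^sup>2 + y4\<^sup>2"
  have "Y = m * (p - (2 * (y1 * t1 + y2 * t2 + y3 * t3 + y4 * t4) + m * (t1\<^sup>2 + t2\<^sup>2 + t3\<^sup>2 + t4\<^sup>2)))"
    using x unfolding Y_def xy by (simp add: power2_eq_square algebra_simps)
  then obtain r where r: "Y = m * r"
    by blast
  have "0 \<le> m * r"
    unfolding r[symmetric] Y_def by simp
  moreover have "m * r \<le> m * m"
    using small r unfolding Y_def by (simp add: power2_eq_square)
  moreover have "\<not> (r = 0 \<or> r = m)"
  proof
    assume "r = 0 \<or> r = m"
    then have "m\<^sup>2 dvd m * p"
      using square_dvd_of_extreme_residues[of r m y1 y2 y3 y4 t1 t2 t3 t4] small r x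
      unfolding Y_def xy by simp
    then have "m * m dvd m * p"
      by (simp add: power2_eq_square)
    then have "m dvd p"
      using m0 by simp
    then have "m = 1 \<or> m = p"
      using p less_imp_le[OF m0] unfolding prime_int_iff by blast
    then show False
      using m by simp
  qed
  ultimately have "0 < r" "r < m"
    using m0 by (auto simp: zero_le_mult_iff)
  moreover have "sum_four_squares (r * p)"
    using sum_four_squares_of_residues[of m p x1 x2 x3 x4 r y1 y2 y3 y4] x r xy m0
    unfolding Y_def by (simp add: mult.commute)
  ultimately show thesis
    using that by blast
qed

lemma sum_four_squares_prime_of_multiple:
  fixes p m :: int
  assumes "prime p" "0 < m" "m < p" "sum_four_squares (m * p)"
  shows "sum_four_squares p"
  using assms(2-)
proof (induction "nat m" arbitrary: m rule: less_induct)
  case less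
  show ?case
  proof (cases "m = 1")
    case True
    then show ?thesis
      using less.prems by simp
  next
    case False
    then have "1 < m"
      using less.prems by simp
    then obtain r where "0 < r" "r < m" "sum_four_squares (r * p)"
      using sum_four_squares_descent[OF assms(1)] less.prems by blast
    then show ?thesis
      using less.hyps less.prems by simp
  qed
qed

lemma sum_four_squares_prime:
  fixes p :: int
  assumes p: "prime p"
  shows "sum_four_squares p"
proof (cases "p = 2")
  case True
  then have "p = 1\<^sup>2 + 1\<^sup>2 + 0\<^sup>2 + 0\<^sup>2"
    by simp
  then show ?thesis
    unfolding sum_four_squares_def by blast
next
  case False
  then have p2: "p > 2"
    using prime_ge_2_int[OF p] by simp
  obtain x y where xy: "0 \<le> x" "2 * x < p" "0 \<le> y" "2 * y < p" "p dvd x\<^sup>2 + y\<^sup>2 + 1"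
    using prime_dvd_sum_two_squares_plus_one[OF p p2] by blast
  then obtain m where m: "x\<^sup>2 + y\<^sup>2 + 1 = p * m"
    by blast
  have "(2 * x)\<^sup>2 \<le> (p - 1)\<^sup>2"
    using xy by (intro power_mono) auto
  moreover have "(2 * y)\<^sup>2 \<le> (p - 1)\<^sup>2"
    using xy by (intro power_mono) auto
  moreover have "0 \<le> p * p"
    by simp
  moreover have "4 * (p * m) = (2 * x)\<^sup>2 + (2 * y)\<^sup>2 + 4"
    using m by (simp add: power2_eq_square algebra_simps)
  moreover have "(p - 1)\<^sup>2 = p * p - 2 * p + 1"
    by (simp add: power2_eq_square algebra_simps)
  ultimately have "p * m < p * p"
    using p2 by linarith
  moreover have "0 < p * m"
    unfolding m[symmetric] by (simp add: add_nonneg_pos)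
  ultimately have "0 < m" "m < p"
    using p2 by (simp_all add: zero_less_mult_iff)
  moreover have "sum_four_squares (m * p)"
    unfolding sum_four_squares_def using m
    by (intro exI[of _ x] exI[of _ y] exI[of _ 1] exI[of _ 0]) (simp add: mult.commute)
  ultimately show ?thesis
    using sum_four_squares_prime_of_multiple[OF p] by blast
qed

theorem sum_four_squares_nonneg:
  fixes n :: int
  assumes "0 \<le> n"
  shows "sum_four_squares n"
proof -
  have "sum_four_squares (int k)" for k
  proof (induction k rule: prime_divisors_induct)
    case zero
    then show ?case
      unfolding sum_four_squares_def by (intro exI[of _ 0]) simp
  next
    case (unit x)
    then have "int x = 1\<^sup>2 + 0\<^sup>2 + 0\<^sup>2 + 0\<^sup>2"
      by simp
    then show ?case
      unfolding sum_four_squares_def by blast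
  next
    case (factor p x)
    then show ?case
      by (simp add: sum_four_squares_mult sum_four_squares_prime prime_nat_iff_prime)
  qed
  then show ?thesis
    using assms by (metis nonneg_int_cases)
qed

section \<open>Frobenius distance of reflections\<close>

definition l2_norm :: "nat \<Rightarrow> (nat \<Rightarrow> complex) \<Rightarrow> real" where
  "l2_norm d f = L2_set (\<lambda>i. cmod (f i)) {..<d}"

definition frob_norm :: "nat \<Rightarrow> (nat \<Rightarrow> nat \<Rightarrow> complex) \<Rightarrow> real" where
  "frob_norm d F = L2_set (\<lambda>(i, j). cmod (F i j)) ({..<d} \<times> {..<d})"

lemma l2_norm_power2: "(l2_norm d f)\<^sup>2 = (\<Sum>i<d. (cmod (f i))\<^sup>2)"
  unfolding l2_norm_def L2_set_def by (simp add: sum_nonneg)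

lemma l2_norm_minus_commute: "l2_norm d (\<lambda>i. f i - g i) = l2_norm d (\<lambda>i. g i - f i)"
  unfolding l2_norm_def by (simp add: norm_minus_commute)

lemma l2_norm_unit_cvec: "unit_cvec v \<Longrightarrow> l2_norm (dim_vec v) (\<lambda>i. v $ i) = 1"
  unfolding unit_cvec_def l2_norm_def L2_set_def by simp

lemma inner_le_l2_norm:
  "cmod (\<Sum>k<d. cnj (u k) * v k) \<le> l2_norm d u * l2_norm d v"
proof -
  have "cmod (\<Sum>k<d. cnj (u k) * v k) \<le> (\<Sum>k<d. \<bar>cmod (u k)\<bar> * \<bar>cmod (v k)\<bar>)"
    by (rule order_trans[OF norm_sum]) (simp add: norm_mult)
  also have "\<dots> \<le> l2_norm d u * l2_norm d v"
    unfolding l2_norm_def by (rule L2_set_mult_ineq)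
  finally show ?thesis .
qed

lemma frobenius_norm_eq_frob_norm:
  assumes "dim_row A = d" "dim_col A = d"
  shows "frobenius_norm A = frob_norm d (\<lambda>i j. A $$ (i, j))"
  unfolding frobenius_norm_def frob_norm_def L2_set_def assms
  by (simp add: sum.cartesian_product)

lemma frob_norm_cong:
  "(\<And>i j. i < d \<Longrightarrow> j < d \<Longrightarrow> F i j = G i j) \<Longrightarrow> frob_norm d F = frob_norm d G"
  unfolding frob_norm_def by (rule L2_set_cong) auto

lemma frob_norm_add_le:
  "frob_norm d (\<lambda>i j. F i j + G i j) \<le> frob_norm d F + frob_norm d G"
proof -
  have "frob_norm d (\<lambda>i j. F i j + G i j)
      \<le> L2_set (\<lambda>x. (\<lambda>(i, j). cmod (F i j)) x + (\<lambda>(i, j). cmod (G i j)) x) ({..<d} \<times> {..<d})"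
    unfolding frob_norm_def by (rule L2_set_mono) (auto simp: norm_triangle_ineq)
  also have "\<dots> \<le> frob_norm d F + frob_norm d G"
    unfolding frob_norm_def by (rule L2_set_triangle_ineq)
  finally show ?thesis .
qed

lemma frob_norm_scale: "frob_norm d (\<lambda>i j. c * F i j) = cmod c * frob_norm d F"
  unfolding frob_norm_def L2_set_right_distrib[OF norm_ge_zero]
  by (simp add: norm_mult case_prod_unfold)

lemma frob_norm_outer:
  "frob_norm d (\<lambda>i j. u i * cnj (v j)) = l2_norm d u * l2_norm d v"
proof -
  have "(\<Sum>(i, j)\<in>{..<d} \<times> {..<d}. (cmod (u i * cnj (v j)))\<^sup>2)
      = (\<Sum>i<d. (cmod (u i))\<^sup>2) * (\<Sum>j<d. (cmod (v j))\<^sup>2)"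
    by (simp add: sum.cartesian_product[symmetric] sum_product norm_mult power_mult_distrib)
  then show ?thesis
    unfolding frob_norm_def l2_norm_def L2_set_def
    by (simp add: case_prod_unfold real_sqrt_mult)
qed

lemma frob_norm_outer_diff_le:
  "frob_norm d (\<lambda>i j. f i * cnj (f j) - g i * cnj (g j))
     \<le> l2_norm d (\<lambda>i. f i - g i) * (l2_norm d f + l2_norm d g)"
proof -
  have "(\<lambda>i j. f i * cnj (f j) - g i * cnj (g j))
      = (\<lambda>i j. (f i - g i) * cnj (f j) + g i * cnj (f j - g j))"
    by (simp add: algebra_simps)
  then have "frob_norm d (\<lambda>i j. f i * cnj (f j) - g i * cnj (g j))
      \<le> l2_norm d (\<lambda>i. f i - g i) * l2_norm d f + l2_norm d g * l2_norm d (\<lambda>i. f i - g i)"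
    using frob_norm_add_le[of d "\<lambda>i j. (f i - g i) * cnj (f j)" "\<lambda>i j. g i * cnj (f j - g j)"]
    unfolding frob_norm_outer[of d "\<lambda>i. f i - g i" f] frob_norm_outer[of d g "\<lambda>j. f j - g j"]
    by simp
  then show ?thesis
    by (simp add: algebra_simps)
qed

lemma inner_near_orthogonal_le:
  assumes "(\<Sum>k<d. cnj (a k) * b k) = 0"
  shows "cmod (\<Sum>k<d. cnj (p k) * q k)
    \<le> l2_norm d (\<lambda>k. p k - a k) * l2_norm d q + l2_norm d a * l2_norm d (\<lambda>k. q k - b k)"
proof -
  have "(\<Sum>k<d. cnj (p k) * q k)
      = (\<Sum>k<d. cnj (p k - a k) * q k) + (\<Sum>k<d. cnj (a k) * (q k - b k)) + (\<Sum>k<d. cnj (a k) * b k)"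
    by (simp add: sum.distrib[symmetric] algebra_simps)
  then show ?thesis
    using assms norm_triangle_ineq[of "\<Sum>k<d. cnj (p k - a k) * q k" "\<Sum>k<d. cnj (a k) * (q k - b k)"]
      inner_le_l2_norm[where u="\<lambda>k. p k - a k" and v=q and d=d]
      inner_le_l2_norm[where u=a and v="\<lambda>k. q k - b k" and d=d]
    by simp
qed

lemma refl_op_dims [simp]: "dim_row (refl_op v) = dim_vec v" "dim_col (refl_op v) = dim_vec v"
  unfolding refl_op_def outer_prod_def by simp_all

lemma refl_op_index:
  "i < dim_vec v \<Longrightarrow> j < dim_vec v \<Longrightarrow>
    refl_op v $$ (i, j) = (if i = j then 1 else 0) - 2 * (v $ i * cnj (v $ j))"
  unfolding refl_op_def outer_prod_def by simp

lemma frobenius_norm_refl_op_diff_le: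
  assumes "dim_vec \<phi> = d" "dim_vec \<psi> = d" "unit_cvec \<phi>" "unit_cvec \<psi>"
  shows "frobenius_norm (refl_op \<phi> - refl_op \<psi>) \<le> 4 * l2_norm d (\<lambda>i. \<phi> $ i - \<psi> $ i)"
proof -
  have "frobenius_norm (refl_op \<phi> - refl_op \<psi>)
      = frob_norm d (\<lambda>i j. 2 * (\<psi> $ i * cnj (\<psi> $ j) - \<phi> $ i * cnj (\<phi> $ j)))"
    using assms(1,2) by (auto simp: frobenius_norm_eq_frob_norm frob_norm_def refl_op_index
        algebra_simps intro!: L2_set_cong)
  also have "\<dots> = 2 * frob_norm d (\<lambda>i j. \<psi> $ i * cnj (\<psi> $ j) - \<phi> $ i * cnj (\<phi> $ j))"
    by (subst frob_norm_scale) simp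
  also have "\<dots> \<le> 2 * (l2_norm d (\<lambda>i. \<psi> $ i - \<phi> $ i) * (1 + 1))"
    using frob_norm_outer_diff_le[of d "\<lambda>i. \<psi> $ i" "\<lambda>i. \<phi> $ i"]
      l2_norm_unit_cvec[of \<phi>] l2_norm_unit_cvec[of \<psi>] assms
    by simp
  finally show ?thesis
    using l2_norm_minus_commute[of d "\<lambda>i. \<phi> $ i" "\<lambda>i. \<psi> $ i"] by simp
qed

lemma refl_op_mult_index:
  assumes "dim_vec p = d" "dim_vec q = d" "i < d" "j < d"
  shows "(refl_op p * refl_op q) $$ (i, j) = (if i = j then 1 else 0) - 2 * (p $ i * cnj (p $ j))
    - 2 * (q $ i * cnj (q $ j)) + 4 * (p $ i * cnj (q $ j)) * (\<Sum>k<d. cnj (p $ k) * q $ k)"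
proof -
  have "(refl_op p * refl_op q) $$ (i, j) = (\<Sum>k<d. refl_op p $$ (i, k) * refl_op q $$ (k, j))"
    using assms by (simp add: scalar_prod_def atLeast0LessThan)
  also have "\<dots> = (\<Sum>k<d. (if k = i then (if i = j then 1 else 0) - 2 * (q $ k * cnj (q $ j)) else 0)
      - (if k = j then 2 * (p $ i * cnj (p $ k)) else 0) + 4 * (p $ i * cnj (q $ j)) * (cnj (p $ k) * q $ k))"
    by (rule sum.cong) (auto simp: refl_op_index assms algebra_simps)
  also have "\<dots> = (if i = j then 1 else 0) - 2 * (q $ i * cnj (q $ j)) - 2 * (p $ i * cnj (p $ j))
      + 4 * (p $ i * cnj (q $ j)) * (\<Sum>k<d. cnj (p $ k) * q $ k)"
    using assms by (simp add: sum.distrib sum_subtractf sum_distrib_left)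
  finally show ?thesis
    by (simp add: algebra_simps)
qed

text \<open>The coordinates of \<open>\<psi> \<otimes> |b\<rangle>\<close>, with the ancilla as least significant qubit as in
  \<open>kron_id2\<close>.\<close>
definition tensor_ancilla :: "complex vec \<Rightarrow> nat \<Rightarrow> nat \<Rightarrow> complex" where
  "tensor_ancilla \<psi> b i = (if i mod 2 = b then \<psi> $ (i div 2) else 0)"

lemma sum_lessThan_double:
  fixes f :: "nat \<Rightarrow> 'a :: comm_monoid_add"
  shows "(\<Sum>k<2 * n. f k) = (\<Sum>k<n. f (2 * k) + f (2 * k + 1))"
  by (induction n) (auto simp: lessThan_Suc ac_simps)

lemma l2_norm_tensor_ancilla:
  "b < 2 \<Longrightarrow> l2_norm (2 * D) (tensor_ancilla \<psi> b) = l2_norm D (\<lambda>i. \<psi> $ i)"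
  unfolding l2_norm_def L2_set_def tensor_ancilla_def sum_lessThan_double
  by (cases b) auto

lemma tensor_ancilla_orthogonal:
  "(\<Sum>k<2 * D. cnj (tensor_ancilla \<psi> 0 k) * tensor_ancilla \<psi> 1 k) = 0"
  unfolding tensor_ancilla_def by (intro sum.neutral) auto

lemma kron_id2_dims [simp]:
  "dim_row (kron_id2 A) = 2 * dim_row A" "dim_col (kron_id2 A) = 2 * dim_col A"
  unfolding kron_id2_def by simp_all

lemma kron_id2_refl_op_index:
  assumes "dim_vec \<psi> = D" "i < 2 * D" "j < 2 * D"
  shows "kron_id2 (refl_op \<psi>) $$ (i, j) = (if i = j then 1 else 0)
    - 2 * (tensor_ancilla \<psi> 0 i * cnj (tensor_ancilla \<psi> 0 j))
    - 2 * (tensor_ancilla \<psi> 1 i * cnj (tensor_ancilla \<psi> 1 j))"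
proof -
  have "i div 2 < D" "j div 2 < D"
    using assms by auto
  moreover have "i = j \<longleftrightarrow> i mod 2 = j mod 2 \<and> i div 2 = j div 2"
    by (metis div_mult_mod_eq)
  ultimately show ?thesis
    using assms unfolding kron_id2_def tensor_ancilla_def
    by (auto simp: refl_op_index mod2_eq_if)
qed

text \<open>With \<open>a = \<psi> \<otimes> |0\<rangle>\<close> and \<open>b = \<psi> \<otimes> |1\<rangle>\<close> one has \<open>R\<^sub>\<psi> \<otimes> I = R\<^sub>a R\<^sub>b\<close> exactly, as
  \<open>a \<perp> b\<close>; so \<open>R\<^sub>p R\<^sub>q - R\<^sub>\<psi> \<otimes> I\<close> splits into two outer-product differences and a
  term weighted by \<open>\<langle>p, q\<rangle>\<close>.\<close>
lemma refl_op_mult_minus_kron_id2_index: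
  assumes "dim_vec p = 2 * D" "dim_vec q = 2 * D" "dim_vec \<psi> = D" "i < 2 * D" "j < 2 * D"
  shows "(refl_op p * refl_op q - kron_id2 (refl_op \<psi>)) $$ (i, j)
    = 2 * (tensor_ancilla \<psi> 0 i * cnj (tensor_ancilla \<psi> 0 j) - p $ i * cnj (p $ j))
    + 2 * (tensor_ancilla \<psi> 1 i * cnj (tensor_ancilla \<psi> 1 j) - q $ i * cnj (q $ j))
    + 4 * (\<Sum>k<2 * D. cnj (p $ k) * q $ k) * (p $ i * cnj (q $ j))"
proof -
  have "(refl_op p * refl_op q - kron_id2 (refl_op \<psi>)) $$ (i, j)
      = (refl_op p * refl_op q) $$ (i, j) - kron_id2 (refl_op \<psi>) $$ (i, j)"
    using assms by simp
  then show ?thesis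
    unfolding refl_op_mult_index[OF assms(1,2,4,5)] kron_id2_refl_op_index[OF assms(3-5)]
    by (simp add: algebra_simps)
qed

lemma frobenius_norm_refl_op_mult_diff_le:
  assumes dims: "dim_vec p = 2 * D" "dim_vec q = 2 * D" "dim_vec \<psi> = D"
    and units: "unit_cvec p" "unit_cvec q" "unit_cvec \<psi>"
    and p_near: "l2_norm (2 * D) (\<lambda>k. p $ k - tensor_ancilla \<psi> 0 k) \<le> \<delta>"
    and q_near: "l2_norm (2 * D) (\<lambda>k. q $ k - tensor_ancilla \<psi> 1 k) \<le> \<delta>"
  shows "frobenius_norm (refl_op p * refl_op q - kron_id2 (refl_op \<psi>)) \<le> 16 * \<delta>"
proof -
  define d where "d = 2 * D"
  define a where "a = tensor_ancilla \<psi> 0"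
  define b where "b = tensor_ancilla \<psi> 1"
  define c where "c = (\<Sum>k<d. cnj (p $ k) * q $ k)"
  define X where "X = (\<lambda>i j. a i * cnj (a j) - p $ i * cnj (p $ j))"
  define Y where "Y = (\<lambda>i j. b i * cnj (b j) - q $ i * cnj (q $ j))"
  have norms: "l2_norm d (\<lambda>k. p $ k) = 1" "l2_norm d (\<lambda>k. q $ k) = 1" "l2_norm d a = 1" "l2_norm d b = 1"
    using l2_norm_unit_cvec[OF units(1)] l2_norm_unit_cvec[OF units(2)] l2_norm_unit_cvec[OF units(3)]
      l2_norm_tensor_ancilla[where b=0 and D=D and \<psi>=\<psi>]
      l2_norm_tensor_ancilla[where b=1 and D=D and \<psi>=\<psi>] dims
    by (simp_all add: d_def a_def b_def)
  have "cmod c \<le> 2 * \<delta>"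
    using inner_near_orthogonal_le[where d=d and a=a and b=b and p="\<lambda>k. p $ k" and q="\<lambda>k. q $ k"] tensor_ancilla_orthogonal[where D=D and \<psi>=\<psi>]
      norms p_near q_near
    by (simp add: c_def d_def a_def b_def)
  have "frobenius_norm (refl_op p * refl_op q - kron_id2 (refl_op \<psi>))
      = frob_norm d (\<lambda>i j. (refl_op p * refl_op q - kron_id2 (refl_op \<psi>)) $$ (i, j))"
    using dims by (intro frobenius_norm_eq_frob_norm) (simp_all add: d_def)
  also have "\<dots> = frob_norm d (\<lambda>i j. 2 * X i j + 2 * Y i j + 4 * c * (p $ i * cnj (q $ j)))"
    using refl_op_mult_minus_kron_id2_index[OF dims]
    by (intro frob_norm_cong) (simp add: X_def Y_def a_def b_def c_def d_def)
  also have "\<dots> \<le> 2 * frob_norm d X + 2 * frob_norm d Y + 4 * cmod c * (1 * 1)"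
    using frob_norm_add_le[of d "\<lambda>i j. 2 * X i j + 2 * Y i j" "\<lambda>i j. 4 * c * (p $ i * cnj (q $ j))"]
      frob_norm_add_le[of d "\<lambda>i j. 2 * X i j" "\<lambda>i j. 2 * Y i j"]
      frob_norm_scale[of d 2 X] frob_norm_scale[of d 2 Y]
      frob_norm_scale[of d "4 * c" "\<lambda>i j. p $ i * cnj (q $ j)"]
      frob_norm_outer[of d "\<lambda>i. p $ i" "\<lambda>j. q $ j"] norms
    by (simp add: norm_mult)
  also have "\<dots> \<le> 2 * (2 * \<delta>) + 2 * (2 * \<delta>) + 4 * (2 * \<delta>)"
  proof -
    have "frob_norm d X \<le> 2 * \<delta>"
      using frob_norm_outer_diff_le[of d a "\<lambda>i. p $ i"] norms p_near
        l2_norm_minus_commute[of d a "\<lambda>i. p $ i"]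
      by (simp add: X_def a_def d_def)
    moreover have "frob_norm d Y \<le> 2 * \<delta>"
      using frob_norm_outer_diff_le[of d b "\<lambda>i. q $ i"] norms q_near
        l2_norm_minus_commute[of d b "\<lambda>i. q $ i"]
      by (simp add: Y_def b_def d_def)
    ultimately show ?thesis
      using \<open>cmod c \<le> 2 * \<delta>\<close> by simp
  qed
  finally show ?thesis
    by simp
qed

section \<open>Rounding to dyadic Gaussian integers\<close>

definition round_to_zero :: "real \<Rightarrow> int" where
  "round_to_zero x = (if 0 \<le> x then \<lfloor>x\<rfloor> else \<lceil>x\<rceil>)"

lemma round_to_zero_zero [simp]: "round_to_zero 0 = 0"
  by (simp add: round_to_zero_def)

lemma abs_round_to_zero_le: "\<bar>of_int (round_to_zero x)\<bar> \<le> \<bar>x\<bar>"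
proof (cases "0 \<le> x")
  case True
  then show ?thesis
    using of_int_floor_le[of x] by (simp add: round_to_zero_def)
next
  case False
  then show ?thesis
    using le_of_int_ceiling[of x] by (simp add: round_to_zero_def)
qed

lemma abs_round_to_zero_diff_le: "\<bar>x - of_int (round_to_zero x)\<bar> \<le> 1"
  unfolding round_to_zero_def
  using of_int_floor_le[of x] real_of_int_floor_add_one_ge[of x] le_of_int_ceiling[of x]
    of_int_ceiling_le_add_one[of x]
  by (cases "0 \<le> x") (simp_all add: abs_le_iff, linarith+)

lemma scaled_round_to_zero:
  fixes r s :: real
  assumes "0 < s"
  defines "a \<equiv> of_int (round_to_zero (s * r)) / s"
  shows "a\<^sup>2 \<le> r\<^sup>2" and "(a - r)\<^sup>2 \<le> 1 / s\<^sup>2" and "r\<^sup>2 - a\<^sup>2 \<le> 2 * \<bar>r\<bar> / s"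
proof -
  have "\<bar>a\<bar> \<le> \<bar>r\<bar>"
    using abs_round_to_zero_le[of "s * r"] assms by (simp add: a_def abs_mult divide_le_eq mult.commute)
  then show a_le: "a\<^sup>2 \<le> r\<^sup>2"
    by (simp add: abs_le_square_iff)
  have "\<bar>a - r\<bar> \<le> 1 / s"
    using abs_round_to_zero_diff_le[of "s * r"] assms
    by (simp add: a_def field_simps abs_minus_commute)
  then show "(a - r)\<^sup>2 \<le> 1 / s\<^sup>2"
    by (metis abs_ge_zero power2_abs power_divide power_mono power_one)
  have "r\<^sup>2 - a\<^sup>2 = (r - a) * (r + a)"
    by (simp add: power2_eq_square algebra_simps)
  also have "\<dots> \<le> \<bar>r - a\<bar> * \<bar>r + a\<bar>"
    by (metis abs_ge_self abs_mult)
  also have "\<dots> \<le> (1 / s) * (2 * \<bar>r\<bar>)"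
    using \<open>\<bar>a - r\<bar> \<le> 1 / s\<close> \<open>\<bar>a\<bar> \<le> \<bar>r\<bar>\<close> assms(1)
    by (intro mult_mono) (auto simp: abs_minus_commute)
  finally show "r\<^sup>2 - a\<^sup>2 \<le> 2 * \<bar>r\<bar> / s"
    by simp
qed

definition gauss_point :: "nat \<Rightarrow> int \<Rightarrow> int \<Rightarrow> complex" where
  "gauss_point m a b = Complex (of_int a / 2 ^ m) (of_int b / 2 ^ m)"

definition round_gauss :: "nat \<Rightarrow> complex \<Rightarrow> complex" where
  "round_gauss m z = gauss_point m (round_to_zero (2 ^ m * Re z)) (round_to_zero (2 ^ m * Im z))"

lemma ring_coord_gauss_point: "ring_coord m (gauss_point m a b)"
  unfolding ring_coord_def gauss_point_def
  by (rule exI[of _ a], rule exI[of _ 0], rule exI[of _ b], rule exI[of _ 0]) (simp add: complex_eq_iff)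

lemma power2_two_power: "((2::real) ^ m)\<^sup>2 = 4 ^ m"
  by (simp add: power2_eq_square flip: power_mult_distrib)

lemma norm_gauss_point_power2: "(cmod (gauss_point m a b))\<^sup>2 = of_int (a\<^sup>2 + b\<^sup>2) / 4 ^ m"
  by (simp add: gauss_point_def cmod_power2 power_divide add_divide_distrib power2_two_power)

lemma round_gauss_zero [simp]: "round_gauss m 0 = 0"
  by (simp add: round_gauss_def gauss_point_def complex_eq_iff)

lemma round_gauss_estimates:
  fixes m :: nat and z :: complex
  defines "w \<equiv> round_gauss m z"
  shows "(cmod w)\<^sup>2 \<le> (cmod z)\<^sup>2"
    and "(cmod (w - z))\<^sup>2 \<le> 2 / 4 ^ m"
    and "(cmod z)\<^sup>2 - (cmod w)\<^sup>2 \<le> 2 * sqrt 2 * cmod z / 2 ^ m"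
proof -
  have s: "(0::real) < 2 ^ m" "((2::real) ^ m)\<^sup>2 = 4 ^ m"
    by (simp_all add: power2_two_power)
  note re = scaled_round_to_zero[OF s(1), of "Re z"]
  note im = scaled_round_to_zero[OF s(1), of "Im z"]
  have w: "(cmod w)\<^sup>2 = (of_int (round_to_zero (2 ^ m * Re z)) / 2 ^ m)\<^sup>2
      + (of_int (round_to_zero (2 ^ m * Im z)) / 2 ^ m)\<^sup>2"
      "(cmod (w - z))\<^sup>2 = (of_int (round_to_zero (2 ^ m * Re z)) / 2 ^ m - Re z)\<^sup>2
      + (of_int (round_to_zero (2 ^ m * Im z)) / 2 ^ m - Im z)\<^sup>2"
    by (simp_all add: w_def round_gauss_def gauss_point_def cmod_power2)
  show "(cmod w)\<^sup>2 \<le> (cmod z)\<^sup>2"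
    using re(1) im(1) unfolding w(1) cmod_power2[of z] by linarith
  show "(cmod (w - z))\<^sup>2 \<le> 2 / 4 ^ m"
    using re(2) im(2) unfolding w(2) s(2) by simp
  have "\<bar>Re z\<bar> + \<bar>Im z\<bar> \<le> sqrt 2 * cmod z"
  proof (rule power2_le_imp_le)
    have "0 \<le> (\<bar>Re z\<bar> - \<bar>Im z\<bar>)\<^sup>2"
      by simp
    moreover have "(sqrt 2 * cmod z)\<^sup>2 = 2 * ((Re z)\<^sup>2 + (Im z)\<^sup>2)"
      by (simp add: power_mult_distrib cmod_power2)
    ultimately show "(\<bar>Re z\<bar> + \<bar>Im z\<bar>)\<^sup>2 \<le> (sqrt 2 * cmod z)\<^sup>2"
      by (simp add: power2_diff power2_sum)
  qed simp
  have "(cmod z)\<^sup>2 - (cmod w)\<^sup>2 \<le> 2 * (\<bar>Re z\<bar> + \<bar>Im z\<bar>) / 2 ^ m"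
    using re(3) im(3) unfolding w(1) cmod_power2[of z] by (simp add: add_divide_distrib)
  also have "\<dots> \<le> 2 * (sqrt 2 * cmod z) / 2 ^ m"
    using \<open>\<bar>Re z\<bar> + \<bar>Im z\<bar> \<le> sqrt 2 * cmod z\<close> by (simp add: divide_right_mono)
  finally show "(cmod z)\<^sup>2 - (cmod w)\<^sup>2 \<le> 2 * sqrt 2 * cmod z / 2 ^ m"
    by (simp add: mult.assoc)
qed

lemma sum_norm_le_sqrt_dim: "l2_norm D \<psi> = 1 \<Longrightarrow> (\<Sum>i<D. cmod (\<psi> i)) \<le> sqrt D"
  using L2_set_mult_ineq[of "\<lambda>i. cmod (\<psi> i)" "\<lambda>_. 1" "{..<D}"]
  by (simp add: l2_norm_def L2_set_constant)

lemma round_gauss_sum_estimates: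
  fixes \<psi> :: "nat \<Rightarrow> complex" and m :: nat
  assumes "l2_norm D \<psi> = 1"
  defines "t \<equiv> sqrt (2 * D) / 2 ^ m"
  shows "(\<Sum>i<D. (cmod (round_gauss m (\<psi> i) - \<psi> i))\<^sup>2) \<le> t\<^sup>2"
    and "1 - (\<Sum>i<D. (cmod (round_gauss m (\<psi> i)))\<^sup>2) \<le> 2 * t"
proof -
  have "(\<Sum>i<D. (cmod (round_gauss m (\<psi> i) - \<psi> i))\<^sup>2) \<le> (\<Sum>i<D. 2 / 4 ^ m)"
    by (intro sum_mono round_gauss_estimates)
  also have "\<dots> = t\<^sup>2"
    by (simp add: t_def power_divide power2_two_power)
  finally show "(\<Sum>i<D. (cmod (round_gauss m (\<psi> i) - \<psi> i))\<^sup>2) \<le> t\<^sup>2" .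
  have "1 - (\<Sum>i<D. (cmod (round_gauss m (\<psi> i)))\<^sup>2)
      = (\<Sum>i<D. (cmod (\<psi> i))\<^sup>2 - (cmod (round_gauss m (\<psi> i)))\<^sup>2)"
    using assms(1) l2_norm_power2[of D \<psi>] by (simp add: sum_subtractf)
  also have "\<dots> \<le> (\<Sum>i<D. 2 * sqrt 2 / 2 ^ m * cmod (\<psi> i))"
    by (intro sum_mono) (use round_gauss_estimates(3) in auto)
  also have "\<dots> = 2 * sqrt 2 / 2 ^ m * (\<Sum>i<D. cmod (\<psi> i))"
    by (rule sum_distrib_left[symmetric])
  also have "\<dots> \<le> 2 * sqrt 2 / 2 ^ m * sqrt D"
    by (intro mult_left_mono sum_norm_le_sqrt_dim[OF assms(1)]) simp
  also have "\<dots> = 2 * t"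
    by (simp add: t_def real_sqrt_mult)
  finally show "1 - (\<Sum>i<D. (cmod (round_gauss m (\<psi> i)))\<^sup>2) \<le> 2 * t" .
qed

lemma norm_add_power2_if_zero: "x = 0 \<or> y = 0 \<Longrightarrow> (cmod (x + y))\<^sup>2 = (cmod x)\<^sup>2 + (cmod y)\<^sup>2"
  by auto

lemma gauss_fill_two_coordinates:
  fixes N :: int and j k D :: nat
  assumes "j < D" "k < D" "j \<noteq> k" "N \<le> 4 ^ m"
  obtains g where "\<And>i. ring_coord m (g i)" "\<And>i. i \<noteq> j \<Longrightarrow> i \<noteq> k \<Longrightarrow> g i = 0"
    "(\<Sum>i<D. (cmod (g i))\<^sup>2) = 1 - of_int N / 4 ^ m"
proof -
  obtain a b c d where abcd: "4 ^ m - N = a\<^sup>2 + b\<^sup>2 + c\<^sup>2 + d\<^sup>2"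
    using sum_four_squares_nonneg[of "4 ^ m - N"] assms(4) unfolding sum_four_squares_def by auto
  define g where "g i = (if i = j then gauss_point m a b else if i = k then gauss_point m c d else 0)" for i
  have "gauss_point m 0 0 = 0"
    by (simp add: gauss_point_def complex_eq_iff)
  then have "ring_coord m (g i)" for i
    using ring_coord_gauss_point[of m 0 0] by (simp add: g_def ring_coord_gauss_point)
  moreover have "g i = 0" if "i \<noteq> j" "i \<noteq> k" for i
    using that by (simp add: g_def)
  moreover have "(\<Sum>i<D. (cmod (g i))\<^sup>2) = 1 - of_int N / 4 ^ m"
  proof -
    have deficit: "(of_int a)\<^sup>2 + (of_int b)\<^sup>2 + ((of_int c)\<^sup>2 + (of_int d)\<^sup>2) = (4::real) ^ m - of_int N"
      using arg_cong[OF abcd, of real_of_int] by simp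
    have "(\<Sum>i<D. (cmod (g i))\<^sup>2) = (\<Sum>i<D. (if i = j then (cmod (gauss_point m a b))\<^sup>2 else 0)
        + (if i = k then (cmod (gauss_point m c d))\<^sup>2 else 0))"
      using assms(3) by (intro sum.cong) (auto simp: g_def)
    also have "\<dots> = (cmod (gauss_point m a b))\<^sup>2 + (cmod (gauss_point m c d))\<^sup>2"
      using assms(1,2) by (simp add: sum.distrib sum.delta)
    also have "\<dots> = 1 - of_int N / 4 ^ m"
      using deficit by (simp add: norm_gauss_point_power2 diff_divide_distrib flip: add_divide_distrib)
    finally show ?thesis .
  qed
  ultimately show thesis
    using that by blast
qed

lemma ring_unit_vector_near:
  fixes \<psi> :: "nat \<Rightarrow> complex"
  assumes unit: "l2_norm D \<psi> = 1"
    and zeros: "j < D" "k < D" "j \<noteq> k" "\<psi> j = 0" "\<psi> k = 0"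
    and small: "sqrt (2 * D) / 2 ^ m \<le> 1"
  obtains \<phi> where "dim_vec \<phi> = D" "unit_cvec \<phi>" "\<forall>i<D. ring_coord m (\<phi> $ i)"
    "l2_norm D (\<lambda>i. \<phi> $ i - \<psi> i) \<le> sqrt (3 * (sqrt (2 * D) / 2 ^ m))"
proof -
  define t where "t = sqrt (2 * D) / 2 ^ m"
  define z where "z i = round_gauss m (\<psi> i)" for i
  define N where "N = (\<Sum>i<D. (round_to_zero (2 ^ m * Re (\<psi> i)))\<^sup>2 + (round_to_zero (2 ^ m * Im (\<psi> i)))\<^sup>2)"
  have norm_z: "(\<Sum>i<D. (cmod (z i))\<^sup>2) = of_int N / 4 ^ m"
    by (simp add: z_def N_def round_gauss_def norm_gauss_point_power2 sum_divide_distrib)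
  have "(\<Sum>i<D. (cmod (z i))\<^sup>2) \<le> (\<Sum>i<D. (cmod (\<psi> i))\<^sup>2)"
    unfolding z_def by (intro sum_mono round_gauss_estimates)
  then have "real_of_int N \<le> real_of_int (4 ^ m)"
    using unit l2_norm_power2[of D \<psi>] unfolding norm_z by simp
  \<comment> \<open>Rounding towards zero loses norm; the deficit \<open>4\<^sup>m - N\<close> is put into the two zero coordinates.\<close>
  then obtain g where g: "\<And>i. ring_coord m (g i)" "\<And>i. i \<noteq> j \<Longrightarrow> i \<noteq> k \<Longrightarrow> g i = 0"
      "(\<Sum>i<D. (cmod (g i))\<^sup>2) = 1 - (\<Sum>i<D. (cmod (z i))\<^sup>2)"
    using gauss_fill_two_coordinates[OF zeros(1-3), of N m] unfolding norm_z by auto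
  define \<phi> where "\<phi> = vec D (\<lambda>i. z i + g i)"
  have z_zero: "z j = 0" "z k = 0"
    using zeros by (simp_all add: z_def)
  have support: "(z i = 0 \<and> \<psi> i = 0) \<or> g i = 0" for i
    using z_zero zeros(4,5) g(2)[of i] by (cases "i = j"; cases "i = k") auto
  have disjoint: "z i = 0 \<or> g i = 0" "z i - \<psi> i = 0 \<or> g i = 0" for i
    using support[of i] by auto
  have "unit_cvec \<phi>"
    unfolding unit_cvec_def \<phi>_def
    using norm_add_power2_if_zero[OF disjoint(1)] by (simp add: sum.distrib g(3))
  moreover have "ring_coord m (\<phi> $ i)" if "i < D" for i
    using that disjoint(1)[of i] g(1)[of i]
    by (auto simp: \<phi>_def z_def round_gauss_def ring_coord_gauss_point)
  moreover have "l2_norm D (\<lambda>i. \<phi> $ i - \<psi> i) \<le> sqrt (3 * t)"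
  proof -
    have "(l2_norm D (\<lambda>i. \<phi> $ i - \<psi> i))\<^sup>2
        = (\<Sum>i<D. (cmod (z i - \<psi> i))\<^sup>2) + (1 - (\<Sum>i<D. (cmod (z i))\<^sup>2))"
      unfolding l2_norm_power2 \<phi>_def g(3)[symmetric]
      using norm_add_power2_if_zero[OF disjoint(2)] by (simp add: sum.distrib algebra_simps)
    also have "\<dots> \<le> t\<^sup>2 + 2 * t"
      using round_gauss_sum_estimates[OF unit, of m] unfolding z_def t_def by linarith
    also have "\<dots> \<le> 3 * t"
    proof -
      have "0 \<le> t" "t \<le> 1"
        using small by (simp_all add: t_def)
      then have "t\<^sup>2 \<le> t"
        by (simp add: power2_eq_square mult_left_le)
      then show ?thesis
        by linarith
    qed
    finally show ?thesis
      by (simp add: real_le_rsqrt)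
  qed
  ultimately show thesis
    using that[of \<phi>] by (simp add: \<phi>_def t_def)
qed

section \<open>Choice of the precision\<close>

definition precision :: "nat \<Rightarrow> real \<Rightarrow> nat" where
  "precision n \<epsilon> = (n + 3) div 2 + 10 + nat \<lceil>2 * log 2 (1 / \<epsilon>)\<rceil>"

lemma precision_le:
  assumes "0 < \<epsilon>" "\<epsilon> < 1"
  shows "real (precision n \<epsilon>) \<le> real_of_int \<lceil>real n / 2\<rceil> + 13 * (log 2 (1 / \<epsilon>) + 1)"
proof -
  have "0 < log 2 (1 / \<epsilon>)"
    using assms by simp
  moreover have "real ((n + 3) div 2) \<le> real n / 2 + 3 / 2"
    by linarith
  moreover have "real n / 2 \<le> real_of_int \<lceil>real n / 2\<rceil>"
    by (rule le_of_int_ceiling)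
  moreover have "real (nat \<lceil>2 * log 2 (1 / \<epsilon>)\<rceil>) \<le> 2 * log 2 (1 / \<epsilon>) + 1"
    using \<open>0 < log 2 (1 / \<epsilon>)\<close> of_int_ceiling_le_add_one[of "2 * log 2 (1 / \<epsilon>)"] by linarith
  ultimately show ?thesis
    unfolding precision_def of_nat_add of_nat_numeral distrib_left by linarith
qed

lemma inverse_square_le_two_power:
  assumes "0 < \<epsilon>"
  shows "1 \<le> \<epsilon>\<^sup>2 * 2 ^ nat \<lceil>2 * log 2 (1 / \<epsilon>)\<rceil>"
proof -
  define l where "l = log 2 (1 / \<epsilon>)"
  have "(1 / \<epsilon>) * (1 / \<epsilon>) = 2 powr l * 2 powr l"
    using assms by (simp add: l_def)
  also have "\<dots> = 2 powr (2 * l)"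
    by (simp add: powr_add[symmetric])
  also have "\<dots> \<le> 2 powr real (nat \<lceil>2 * l\<rceil>)"
    by (intro powr_mono) (auto intro: real_nat_ceiling_ge)
  also have "\<dots> = 2 ^ nat \<lceil>2 * l\<rceil>"
    by (rule powr_realpow) simp
  finally show ?thesis
    using assms by (simp add: l_def power2_eq_square field_simps)
qed

lemma sqrt_dim_le_two_power_precision:
  fixes D :: nat
  assumes "0 < \<epsilon>" "D \<le> 2 ^ (n + 2)"
  shows "sqrt D * 1024 \<le> \<epsilon>\<^sup>2 * 2 ^ precision n \<epsilon>"
proof (rule power2_le_imp_le)
  define L where "L = nat \<lceil>2 * log 2 (1 / \<epsilon>)\<rceil>"
  define m where "m = precision n \<epsilon>"
  have "n + 2 + 20 + 2 * L \<le> 2 * m"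
    unfolding m_def precision_def L_def by simp
  then have "(2::real) ^ (n + 2 + 20 + 2 * L) \<le> 2 ^ (2 * m)"
    by (intro power_increasing) simp_all
  then have pow: "(2::real) ^ (n + 2) * 2 ^ 20 * (2 ^ L)\<^sup>2 \<le> (2 ^ m)\<^sup>2"
    by (simp only: power_add power_even_eq)
  have "1 \<le> (\<epsilon>\<^sup>2 * 2 ^ L)\<^sup>2"
    using inverse_square_le_two_power[OF assms(1)] unfolding L_def by (simp add: one_le_power)
  have "real D \<le> 2 ^ (n + 2)"
    using assms(2) by (metis of_nat_le_iff of_nat_numeral of_nat_power)
  then have "(sqrt D * 1024)\<^sup>2 \<le> 2 ^ (n + 2) * 2 ^ 20"
    by (simp add: power_mult_distrib)
  also have "\<dots> \<le> 2 ^ (n + 2) * 2 ^ 20 * (\<epsilon>\<^sup>2 * 2 ^ L)\<^sup>2"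
    using \<open>1 \<le> (\<epsilon>\<^sup>2 * 2 ^ L)\<^sup>2\<close> by simp
  also have "\<dots> = (\<epsilon>\<^sup>2)\<^sup>2 * (2 ^ (n + 2) * 2 ^ 20 * (2 ^ L)\<^sup>2)"
    by (simp add: power_mult_distrib)
  also have "\<dots> \<le> (\<epsilon>\<^sup>2)\<^sup>2 * (2 ^ m)\<^sup>2"
    using pow by (intro mult_left_mono) simp_all
  finally show "(sqrt D * 1024)\<^sup>2 \<le> (\<epsilon>\<^sup>2 * 2 ^ precision n \<epsilon>)\<^sup>2"
    by (simp add: power_mult_distrib m_def)
qed simp

lemma precision_error_le:
  fixes D :: nat
  assumes "0 < \<epsilon>" "\<epsilon> < 1" "D \<le> 2 ^ (n + 2)"
  shows "sqrt D / 2 ^ precision n \<epsilon> \<le> 1"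
    and "sqrt (3 * (sqrt D / 2 ^ precision n \<epsilon>)) \<le> \<epsilon> / 16"
proof -
  have t: "sqrt D / 2 ^ precision n \<epsilon> \<le> \<epsilon>\<^sup>2 / 1024"
    using sqrt_dim_le_two_power_precision[OF assms(1,3)] by (simp add: divide_le_eq mult.commute)
  moreover have "\<epsilon>\<^sup>2 \<le> 1"
    using assms by (simp add: power_le_one)
  ultimately show "sqrt D / 2 ^ precision n \<epsilon> \<le> 1"
    by linarith
  have "(\<epsilon> / 16)\<^sup>2 = \<epsilon>\<^sup>2 / 256"
    by (simp add: power_divide)
  then have "3 * (sqrt D / 2 ^ precision n \<epsilon>) \<le> (\<epsilon> / 16)\<^sup>2"
    using t zero_le_power2[of \<epsilon>] by linarith
  then have "sqrt (3 * (sqrt D / 2 ^ precision n \<epsilon>)) \<le> sqrt ((\<epsilon> / 16)\<^sup>2)"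
    by (rule real_sqrt_le_mono)
  then show "sqrt (3 * (sqrt D / 2 ^ precision n \<epsilon>)) \<le> \<epsilon> / 16"
    using assms(1) by simp
qed

lemma refl_op_approx_two_zeros:
  assumes "dim_vec \<psi> = 2 ^ n" "unit_cvec \<psi>" "2 \<le> card {i. i < 2 ^ n \<and> \<psi> $ i = 0}"
    and "0 < \<epsilon>" "\<epsilon> < 1"
  shows "\<exists>\<phi>. dim_vec \<phi> = 2 ^ n \<and> unit_cvec \<phi> \<and> (\<forall>i < 2 ^ n. ring_coord (precision n \<epsilon>) (\<phi> $ i))
    \<and> frobenius_norm (refl_op \<phi> - refl_op \<psi>) \<le> \<epsilon>"
proof -
  define m where "m = precision n \<epsilon>"
  define \<delta> where "\<delta> = sqrt (3 * (sqrt (2 * 2 ^ n) / 2 ^ m))"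
  have small: "sqrt (2 * 2 ^ n) / 2 ^ m \<le> 1" "\<delta> \<le> \<epsilon> / 16"
    using precision_error_le[OF assms(4,5), where D="2 * 2 ^ n" and n=n]
    by (simp_all add: \<delta>_def m_def)
  define Z where "Z = {i. i < 2 ^ n \<and> \<psi> $ i = 0}"
  have "finite Z" "\<not> card Z \<le> Suc 0"
    using assms(3) by (simp_all add: Z_def)
  then obtain j k where "j \<in> Z" "k \<in> Z" "j \<noteq> k"
    using card_le_Suc0_iff_eq by blast
  then obtain \<phi> where \<phi>: "dim_vec \<phi> = 2 ^ n" "unit_cvec \<phi>" "\<forall>i<2 ^ n. ring_coord m (\<phi> $ i)"
      "l2_norm (2 ^ n) (\<lambda>i. \<phi> $ i - \<psi> $ i) \<le> \<delta>"
    using ring_unit_vector_near[of "2 ^ n" "\<lambda>i. \<psi> $ i" j k m] small(1)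
      l2_norm_unit_cvec[OF assms(2)] assms(1) unfolding Z_def \<delta>_def by auto
  have "frobenius_norm (refl_op \<phi> - refl_op \<psi>) \<le> \<epsilon>"
    using frobenius_norm_refl_op_diff_le[OF \<phi>(1) assms(1) \<phi>(2) assms(2)] \<phi>(4) small(2) assms(4)
    by linarith
  then show ?thesis
    using \<phi> unfolding m_def by blast
qed

lemma refl_op_pair_approx:
  assumes "1 \<le> n" "dim_vec \<psi> = 2 ^ n" "unit_cvec \<psi>" "0 < \<epsilon>" "\<epsilon> < 1"
  shows "\<exists>\<phi>1 \<phi>2. dim_vec \<phi>1 = 2 ^ (n + 1) \<and> dim_vec \<phi>2 = 2 ^ (n + 1) \<and>
    unit_cvec \<phi>1 \<and> unit_cvec \<phi>2 \<and>
    (\<forall>i < 2 ^ (n + 1). ring_coord (precision n \<epsilon>) (\<phi>1 $ i) \<and> ring_coord (precision n \<epsilon>) (\<phi>2 $ i)) \<and>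
    frobenius_norm (refl_op \<phi>1 * refl_op \<phi>2 - kron_id2 (refl_op \<psi>)) \<le> \<epsilon>"
proof -
  define D :: nat where "D = 2 ^ n"
  define m where "m = precision n \<epsilon>"
  define \<delta> where "\<delta> = sqrt (3 * (sqrt (2 * (2 * D)) / 2 ^ m))"
  have "2 ^ 1 \<le> D"
    unfolding D_def using assms(1) by (intro power_increasing) simp_all
  then have "4 \<le> 2 * D"
    by simp
  have small: "sqrt (2 * (2 * D)) / 2 ^ m \<le> 1" "\<delta> \<le> \<epsilon> / 16"
    using precision_error_le[OF assms(4,5), where D="2 * (2 * D)" and n=n]
    by (simp_all add: \<delta>_def m_def D_def)
  have unit: "l2_norm (2 * D) (tensor_ancilla \<psi> b) = 1" if "b < 2" for b
    using l2_norm_tensor_ancilla[OF that] l2_norm_unit_cvec[OF assms(3)] assms(2) by (simp add: D_def)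
  \<comment> \<open>\<open>\<psi> \<otimes> |0\<rangle>\<close> vanishes at the indices 1 and 3, \<open>\<psi> \<otimes> |1\<rangle>\<close> at 0 and 2.\<close>
  obtain p where p: "dim_vec p = 2 * D" "unit_cvec p" "\<forall>i<2 * D. ring_coord m (p $ i)"
      "l2_norm (2 * D) (\<lambda>i. p $ i - tensor_ancilla \<psi> 0 i) \<le> \<delta>"
    by (rule ring_unit_vector_near[where j=1 and k=3, OF unit[of 0]])
      (use \<open>4 \<le> 2 * D\<close> small(1) in \<open>simp_all add: tensor_ancilla_def \<delta>_def\<close>)
  obtain q where q: "dim_vec q = 2 * D" "unit_cvec q" "\<forall>i<2 * D. ring_coord m (q $ i)"
      "l2_norm (2 * D) (\<lambda>i. q $ i - tensor_ancilla \<psi> 1 i) \<le> \<delta>"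
    by (rule ring_unit_vector_near[where j=0 and k=2, OF unit[of 1]])
      (use \<open>4 \<le> 2 * D\<close> small(1) in \<open>simp_all add: tensor_ancilla_def \<delta>_def\<close>)
  have "frobenius_norm (refl_op p * refl_op q - kron_id2 (refl_op \<psi>)) \<le> 16 * \<delta>"
    by (rule frobenius_norm_refl_op_mult_diff_le[OF p(1) q(1) _ p(2) q(2) assms(3) p(4) q(4)])
      (simp add: assms(2) D_def)
  with small(2) have "frobenius_norm (refl_op p * refl_op q - kron_id2 (refl_op \<psi>)) \<le> \<epsilon>"
    by linarith
  then show ?thesis
    using p q unfolding D_def m_def by auto
qed

theorem lemma6:
  "\<exists>C :: real. \<forall>(n::nat) (\<psi>::complex vec) (\<epsilon>::real).
     1 \<le> n \<and> dim_vec \<psi> = 2 ^ n \<and> unit_cvec \<psi> \<and> 0 < \<epsilon> \<and> \<epsilon> < 1 \<longrightarrow>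
     ((\<exists>m::nat. real m \<le> real_of_int \<lceil>real n / 2\<rceil> + C * (log 2 (1 / \<epsilon>) + 1) \<and>
        (\<exists>\<phi>1 \<phi>2 :: complex vec.
           dim_vec \<phi>1 = 2 ^ (n + 1) \<and> dim_vec \<phi>2 = 2 ^ (n + 1) \<and>
           unit_cvec \<phi>1 \<and> unit_cvec \<phi>2 \<and>
           (\<forall>i < 2 ^ (n + 1). ring_coord m (\<phi>1 $ i) \<and> ring_coord m (\<phi>2 $ i)) \<and>
           frobenius_norm (refl_op \<phi>1 * refl_op \<phi>2 - kron_id2 (refl_op \<psi>)) \<le> \<epsilon>))
     \<and> (2 \<le> card {i. i < 2 ^ n \<and> \<psi> $ i = 0} \<longrightarrow>
        (\<exists>m::nat. real m \<le> real_of_int \<lceil>real n / 2\<rceil> + C * (log 2 (1 / \<epsilon>) + 1) \<and>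
          (\<exists>\<phi> :: complex vec.
             dim_vec \<phi> = 2 ^ n \<and> unit_cvec \<phi> \<and>
             (\<forall>i < 2 ^ n. ring_coord m (\<phi> $ i)) \<and>
             frobenius_norm (refl_op \<phi> - refl_op \<psi>) \<le> \<epsilon>))))"
  apply (rule exI[of _ 13], intro allI impI conjI; elim conjE)
  subgoal for n \<psi> \<epsilon>
    using precision_le[where n=n and \<epsilon>=\<epsilon>] refl_op_pair_approx[where n=n and \<psi>=\<psi> and \<epsilon>=\<epsilon>]
    by blast
  subgoal for n \<psi> \<epsilon>
    using precision_le[where n=n and \<epsilon>=\<epsilon>] refl_op_approx_two_zeros[where n=n and \<psi>=\<psi> and \<epsilon>=\<epsilon>]
    by blast
  done

end
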